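(* Let $\Gamma\in\mathcal S$ with embedding $\varphi$ into $\mathbb Z^n$, and let $v_{i_1},\dots,v_{i_k}$ be vertices of $\Gamma$ spanning a connected subtree. Then $w=\sum_{j=1}^k\varphi(v_{i_j})$ is of the form $E_a-\sum_{j\in J}E_j$ or $-2E_a-\sum_{j\in J}E_j$ for some index $a$ and subset $J\subset\{1,\dots,n\}$ with $a\notin J$.
   Context: A plumbing tree is a finite tree $\Gamma$ each of whose vertices $v$ carries an integer decoration $d(v)$. $\Gamma$ is minimal if no vertex has decoration $-1$. For $n\ge 1$ let $(\mathbb Z^n,Q_n)$ be the lattice with basis $E_1,\dots,E_n$ and $Q_n(E_i,E_j)=-\delta_{ij}$, and let $K=\sum_{i=1}^n E_i$. A plumbing tree $\Gamma$ on $n$ vertices is a symplectic plumbing tree if there is a map $\varphi$ (an embedding) from its vertex set to $\mathbb Z^n$ such that: for distinct vertices $v_1,v_2$, $Q_n(\varphi(v_1),\varphi(v_2))$ is $1$ if they are adjacent and $0$ otherwise; $Q_n(\varphi(v),\varphi(v))=d(v)$ for every $v$; and $Q_n(\varphi(v),K)+Q_n(\varphi(v),\varphi(v))=-2$ for every $v$. $\mathcal S$ is the set of minimal, connected symplectic plumbing trees. *)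

theory Defs
  imports Main "HOL-Library.Function_Algebras"
begin

(* Lattice (Z^n, Q_n): vectors are functions nat => int supported on the index set {1..n}. *)
definition in_lattice :: "nat \<Rightarrow> (nat \<Rightarrow> int) \<Rightarrow> bool" where
  "in_lattice n x \<longleftrightarrow> (\<forall>i. i \<notin> {1..n} \<longrightarrow> x i = 0)"

definition Qn :: "nat \<Rightarrow> (nat \<Rightarrow> int) \<Rightarrow> (nat \<Rightarrow> int) \<Rightarrow> int" where
  "Qn n x y = - (\<Sum>i\<in>{1..n}. x i * y i)"

definition E :: "nat \<Rightarrow> (nat \<Rightarrow> int)" where
  "E i = (\<lambda>j. if j = i then 1 else 0)"

definition Kn :: "nat \<Rightarrow> (nat \<Rightarrow> int)" where
  "Kn n = (\<Sum>i\<in>{1..n}. E i)"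

definition simple_graph :: "'v set \<Rightarrow> ('v \<Rightarrow> 'v \<Rightarrow> bool) \<Rightarrow> bool" where
  "simple_graph V adj \<longleftrightarrow> finite V \<and>
     (\<forall>u v. adj u v \<longrightarrow> u \<in> V \<and> v \<in> V) \<and>
     (\<forall>u v. adj u v \<longrightarrow> adj v u) \<and> (\<forall>v. \<not> adj v v)"

definition connected_on :: "'v set \<Rightarrow> ('v \<Rightarrow> 'v \<Rightarrow> bool) \<Rightarrow> bool" where
  "connected_on S adj \<longleftrightarrow> S \<noteq> {} \<and>
     (\<forall>u\<in>S. \<forall>w\<in>S. (u, w) \<in> {(x, y). x \<in> S \<and> y \<in> S \<and> adj x y}\<^sup>*)"

definition edges :: "'v set \<Rightarrow> ('v \<Rightarrow> 'v \<Rightarrow> bool) \<Rightarrow> 'v set set" where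
  "edges V adj = {{u, v} | u v. u \<in> V \<and> v \<in> V \<and> adj u v}"

definition is_tree :: "'v set \<Rightarrow> ('v \<Rightarrow> 'v \<Rightarrow> bool) \<Rightarrow> bool" where
  "is_tree V adj \<longleftrightarrow> simple_graph V adj \<and> connected_on V adj \<and>
     card (edges V adj) = card V - 1"

definition minimal_plumbing :: "'v set \<Rightarrow> ('v \<Rightarrow> int) \<Rightarrow> bool" where
  "minimal_plumbing V d \<longleftrightarrow> (\<forall>v\<in>V. d v \<noteq> -1)"

definition symplectic_embedding ::
  "'v set \<Rightarrow> ('v \<Rightarrow> 'v \<Rightarrow> bool) \<Rightarrow> ('v \<Rightarrow> int) \<Rightarrow> ('v \<Rightarrow> nat \<Rightarrow> int) \<Rightarrow> bool" where
  "symplectic_embedding V adj d phi \<longleftrightarrow>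
     (let n = card V in
       (\<forall>v\<in>V. in_lattice n (phi v)) \<and>
       (\<forall>v1\<in>V. \<forall>v2\<in>V. v1 \<noteq> v2 \<longrightarrow>
          Qn n (phi v1) (phi v2) = (if adj v1 v2 then 1 else 0)) \<and>
       (\<forall>v\<in>V. Qn n (phi v) (phi v) = d v) \<and>
       (\<forall>v\<in>V. Qn n (phi v) (Kn n) + Qn n (phi v) (phi v) = -2))"

definition in_S_with ::
  "'v set \<Rightarrow> ('v \<Rightarrow> 'v \<Rightarrow> bool) \<Rightarrow> ('v \<Rightarrow> int) \<Rightarrow> ('v \<Rightarrow> nat \<Rightarrow> int) \<Rightarrow> bool" where
  "in_S_with V adj d phi \<longleftrightarrow> is_tree V adj \<and> minimal_plumbing V d \<and>
     symplectic_embedding V adj d phi"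

end

theory Submission
  imports Defs
begin

text \<open>
  Put \<open>w = \<Sum>v\<in>S. \<phi> v\<close>. Bilinearity and the adjunction condition
  \<open>Q(\<phi> v, K) = -2 - d v\<close> give \<open>Q(w,w) + Q(w,K) = 2 e(S) - 2 |S|\<close>, where \<open>e(S)\<close> is the
  number of edges inside \<open>S\<close>. A connected vertex set of a tree spans a subtree, so
  \<open>e(S) = |S| - 1\<close> and hence \<open>\<Sum>\<^sub>i w\<^sub>i (w\<^sub>i + 1) = 2\<close>. Every term \<open>w\<^sub>i (w\<^sub>i + 1)\<close> is either
  \<open>0\<close> (for \<open>w\<^sub>i \<in> {0, -1}\<close>) or at least \<open>2\<close>, with equality exactly for \<open>w\<^sub>i \<in> {1, -2}\<close>;
  so one coordinate of \<open>w\<close> is \<open>1\<close> or \<open>-2\<close> and all others are \<open>0\<close> or \<open>-1\<close>.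
\<close>

lemma sum_fun_apply: "(\<Sum>a\<in>A. f a) x = (\<Sum>a\<in>A. f a x)"
  for f :: "'a \<Rightarrow> 'b \<Rightarrow> 'c::comm_monoid_add"
  by (induction A rule: infinite_finite_induct) auto

lemma E_apply: "E a i = (if i = a then 1 else 0)"
  by (simp add: E_def)

lemma sum_E_apply: "finite J \<Longrightarrow> (\<Sum>j\<in>J. E j) i = (if i \<in> J then 1 else 0)"
  by (simp add: sum_fun_apply E_apply)

lemma Kn_apply: "Kn n i = (if i \<in> {1..n} then 1 else 0)"
  by (simp add: Kn_def sum_E_apply)

lemma Qn_commute: "Qn n x y = Qn n y x"
  by (simp add: Qn_def mult.commute)

lemma Qn_sum_left: "Qn n (\<Sum>u\<in>A. x u) y = (\<Sum>u\<in>A. Qn n (x u) y)"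
  unfolding Qn_def by (simp add: sum_fun_apply sum_distrib_right sum_negf sum.swap[of _ A])

lemma Qn_sum_right: "Qn n x (\<Sum>u\<in>A. y u) = (\<Sum>u\<in>A. Qn n x (y u))"
  by (simp add: Qn_commute[of n x] Qn_sum_left)

lemma Qn_self_plus_Qn_Kn: "Qn n w w + Qn n w (Kn n) = - (\<Sum>i\<in>{1..n}. w i * (w i + 1))"
  by (simp add: Qn_def Kn_apply distrib_left sum.distrib)

lemma in_lattice_sum: "(\<And>u. u \<in> A \<Longrightarrow> in_lattice n (x u)) \<Longrightarrow> in_lattice n (\<Sum>u\<in>A. x u)"
  by (simp add: in_lattice_def sum_fun_apply)

lemma mult_succ_ge_2:
  fixes x :: int
  assumes "x * (x + 1) \<noteq> 0"
  shows "2 \<le> x * (x + 1)"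
proof -
  consider "x \<ge> 1" | "x \<le> -2" using assms by fastforce
  then show ?thesis
  proof cases
    case 1
    then have "1 * 2 \<le> x * (x + 1)" by (intro mult_mono) auto
    then show ?thesis by simp
  next
    case 2
    then have "2 * 1 \<le> (- x) * (- x - 1)" by (intro mult_mono) auto
    then show ?thesis by (simp add: algebra_simps)
  qed
qed

lemma mult_succ_eq_2_iff: "x * (x + 1) = 2 \<longleftrightarrow> x = 1 \<or> x = -2" for x :: int
proof
  assume eq: "x * (x + 1) = 2"
  have "(x - 1) * (x + 2) = 0" using eq by (simp add: algebra_simps)
  then show "x = 1 \<or> x = -2" by auto
qed auto

lemma sum_eq_2_single_nonzero_term:
  fixes f :: "'a \<Rightarrow> int"
  assumes "finite A" and gap: "\<And>i. i \<in> A \<Longrightarrow> f i = 0 \<or> 2 \<le> f i" and sum2: "sum f A = 2"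
  obtains a where "a \<in> A" "f a = 2" "\<And>i. i \<in> A - {a} \<Longrightarrow> f i = 0"
proof -
  obtain a where a: "a \<in> A" "f a \<noteq> 0"
    using sum2 by (metis sum.neutral zero_neq_numeral)
  have nonneg: "\<And>i. i \<in> A - {a} \<Longrightarrow> 0 \<le> f i"
    using gap by fastforce
  have split: "sum f A = f a + sum f (A - {a})"
    using \<open>finite A\<close> a(1) by (rule sum.remove)
  have rest: "0 \<le> sum f (A - {a})"
    using nonneg by (rule sum_nonneg)
  have "2 \<le> f a"
    using gap[OF a(1)] a(2) by simp
  then have "f a = 2" and rest0: "sum f (A - {a}) = 0"
    using split rest sum2 by linarith+
  moreover have "\<And>i. i \<in> A - {a} \<Longrightarrow> f i = 0"
    using sum_nonneg_eq_0_iff[of "A - {a}" f] rest0 nonneg \<open>finite A\<close> by blast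
  ultimately show thesis
    using that a(1) by blast
qed

lemma lattice_vector_eq_E_minus_sum_E:
  assumes "in_lattice n w" and "(\<Sum>i\<in>{1..n}. w i * (w i + 1)) = 2"
  shows "\<exists>a\<in>{1..n}. \<exists>J\<subseteq>{1..n}. a \<notin> J \<and>
           (w = E a - (\<Sum>j\<in>J. E j) \<or> w = (\<lambda>i. - 2 * E a i) - (\<Sum>j\<in>J. E j))"
proof -
  have "w i * (w i + 1) = 0 \<or> 2 \<le> w i * (w i + 1)" for i
    using mult_succ_ge_2 by blast
  then obtain a where a: "a \<in> {1..n}" "w a * (w a + 1) = 2"
    and rest: "\<And>i. i \<in> {1..n} - {a} \<Longrightarrow> w i * (w i + 1) = 0"
    using sum_eq_2_single_nonzero_term[OF _ _ assms(2)] by blast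
  define J where "J = {i \<in> {1..n}. w i = -1}"
  have J_mem: "i \<in> J \<longleftrightarrow> i \<in> {1..n} \<and> w i = -1" for i
    by (simp add: J_def)
  have "a \<notin> J" "J \<subseteq> {1..n}" "finite J"
    using a(2) by (auto simp: J_def)
  have w_eq: "w = (\<lambda>i. w a * E a i) - (\<Sum>j\<in>J. E j)"
  proof
    fix i
    show "w i = ((\<lambda>i. w a * E a i) - (\<Sum>j\<in>J. E j)) i"
      using assms(1) rest[of i] \<open>a \<notin> J\<close>
      by (cases "i \<in> {1..n}")
        (auto simp: in_lattice_def J_mem E_apply sum_E_apply[OF \<open>finite J\<close>])
  qed
  from a(2) have "w a = 1 \<or> w a = -2"
    by (simp add: mult_succ_eq_2_iff)
  then have "w = E a - (\<Sum>j\<in>J. E j) \<or> w = (\<lambda>i. - 2 * E a i) - (\<Sum>j\<in>J. E j)"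
    using w_eq by auto
  then show ?thesis
    using a(1) \<open>a \<notin> J\<close> \<open>J \<subseteq> {1..n}\<close> by blast
qed

definition arcs :: "'v set \<Rightarrow> ('v \<Rightarrow> 'v \<Rightarrow> bool) \<Rightarrow> ('v \<times> 'v) set" where
  "arcs S adj = {(u, v). u \<in> S \<and> v \<in> S \<and> adj u v}"

lemma finite_arcs: "finite S \<Longrightarrow> finite (arcs S adj)"
  unfolding arcs_def by (rule finite_subset[of _ "S \<times> S"]) auto

lemma card_arcs_eq_twice_card_edges:
  assumes "finite S" "symp adj" "irreflp adj"
  shows "card (arcs S adj) = 2 * card (edges S adj)"
proof -
  let ?ends = "\<lambda>p. {fst p, snd p}"
  have fin: "finite (edges S adj)"
    by (rule finite_subset[of _ "Pow S"]) (auto simp: edges_def assms(1))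
  have img: "?ends ` arcs S adj \<subseteq> edges S adj"
    unfolding arcs_def edges_def by force
  have "card (arcs S adj) = (\<Sum>e\<in>edges S adj. card {p \<in> arcs S adj. ?ends p = e})"
    using sum.group[OF finite_arcs[OF assms(1)] fin img, of "\<lambda>_. 1::nat"] by simp
  also have "\<dots> = (\<Sum>e\<in>edges S adj. 2)"
  proof (rule sum.cong)
    fix e assume "e \<in> edges S adj"
    then obtain u v where uv: "e = {u, v}" "u \<in> S" "v \<in> S" "adj u v"
      unfolding edges_def by auto
    then have "u \<noteq> v"
      using assms(3) by (auto simp: irreflp_def)
    have "{p \<in> arcs S adj. ?ends p = e} = {(u, v), (v, u)}"
      using uv assms(2) unfolding arcs_def by (auto simp: doubleton_eq_iff symp_def)
    then show "card {p \<in> arcs S adj. ?ends p = e} = 2"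
      using \<open>u \<noteq> v\<close> by simp
  qed simp
  finally show ?thesis by simp
qed

lemma rtrancl_leaves_set:
  assumes "(a, b) \<in> R\<^sup>*" "a \<in> S" "b \<notin> S"
  shows "\<exists>x\<in>S. \<exists>y. y \<notin> S \<and> (x, y) \<in> R"
  using assms
proof (induction rule: rtrancl_induct)
  case (step y z)
  then show ?case by (cases "y \<in> S") auto
qed simp

lemma connected_on_insert:
  assumes conn: "connected_on S adj" and "s \<in> S" "adj s x" "adj x s"
  shows "connected_on (insert x S) adj"
proof -
  let ?R = "{(u, v). u \<in> insert x S \<and> v \<in> insert x S \<and> adj u v}"
  have in_S: "(u, v) \<in> ?R\<^sup>*" if "u \<in> S" "v \<in> S" for u v
    using conn that rtrancl_mono[of "{(u, v). u \<in> S \<and> v \<in> S \<and> adj u v}" ?R]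
    unfolding connected_on_def by blast
  have "(s, x) \<in> ?R" "(x, s) \<in> ?R"
    using assms(2-4) by auto
  then have "(u, x) \<in> ?R\<^sup>*" "(x, u) \<in> ?R\<^sup>*" if "u \<in> S" for u
    using in_S[OF that \<open>s \<in> S\<close>] in_S[OF \<open>s \<in> S\<close> that]
    by (auto intro: rtrancl_into_rtrancl converse_rtrancl_into_rtrancl)
  then show ?thesis
    using in_S unfolding connected_on_def by auto
qed

lemma connected_on_boundary_edge:
  assumes "connected_on U adj" "S \<subseteq> U" "S \<noteq> {}" "S \<noteq> U"
  obtains s x where "s \<in> S" "x \<in> U - S" "adj s x"
proof -
  obtain s0 u where "s0 \<in> S" "u \<in> U - S"
    using assms(2-4) by blast
  then have "(s0, u) \<in> {(x, y). x \<in> U \<and> y \<in> U \<and> adj x y}\<^sup>*"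
    using assms(1,2) unfolding connected_on_def by blast
  then show thesis
    using that rtrancl_leaves_set[of s0 u _ S] \<open>s0 \<in> S\<close> \<open>u \<in> U - S\<close> by blast
qed

text \<open>
  Growing a connected set inside a connected superset one neighbouring vertex at a time,
  each step adds at least the two arcs of the new edge.
\<close>

lemma card_arcs_connected_superset:
  assumes "finite U" "S \<subseteq> U" "connected_on S adj" "connected_on U adj" "symp adj" "irreflp adj"
  shows "card (arcs S adj) + 2 * (card U - card S) \<le> card (arcs U adj)"
  using assms(2,3)
proof (induction "card U - card S" arbitrary: S)
  case 0
  then have "S = U"
    using assms(1) card_seteq[of U S] by simp
  then show ?case by simp
next
  case (Suc k)
  have "finite S"
    using Suc.prems(1) assms(1) finite_subset by blast
  have "S \<noteq> U" "S \<noteq> {}"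
    using Suc.hyps(2) Suc.prems(2) unfolding connected_on_def by auto
  then obtain s x where sx: "s \<in> S" "x \<in> U - S" "adj s x"
    using connected_on_boundary_edge[OF assms(4) Suc.prems(1)] by blast
  have "adj x s" "s \<noteq> x"
    using sx assms(5) by (auto simp: symp_def)
  have card_insert: "card (insert x S) = Suc (card S)"
    using \<open>finite S\<close> sx(2) by simp
  have "k = card U - card (insert x S)"
    using Suc.hyps(2) card_insert by simp
  moreover have "insert x S \<subseteq> U"
    using Suc.prems(1) sx(2) by blast
  moreover note connected_on_insert[OF Suc.prems(2) sx(1,3) \<open>adj x s\<close>]
  ultimately have "card (arcs (insert x S) adj) + 2 * (card U - card (insert x S))
      \<le> card (arcs U adj)"
    by (rule Suc.hyps(1))
  moreover have "card (arcs S adj) + 2 \<le> card (arcs (insert x S) adj)"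
  proof -
    have "arcs S adj \<inter> {(s, x), (x, s)} = {}"
      using sx(2) unfolding arcs_def by auto
    moreover have "card {(s, x), (x, s)} = 2"
      using \<open>s \<noteq> x\<close> by simp
    ultimately have "card (arcs S adj \<union> {(s, x), (x, s)}) = card (arcs S adj) + 2"
      using finite_arcs[OF \<open>finite S\<close>] \<open>s \<noteq> x\<close> by simp
    moreover have "arcs S adj \<union> {(s, x), (x, s)} \<subseteq> arcs (insert x S) adj"
      using sx \<open>adj x s\<close> unfolding arcs_def by auto
    ultimately show ?thesis
      using card_mono[OF finite_arcs] \<open>finite S\<close> by (metis finite_insert)
  qed
  moreover have "card (insert x S) \<le> card U"
    using \<open>insert x S \<subseteq> U\<close> assms(1) by (rule card_mono[rotated])
  ultimately show ?case
    using card_insert by linarith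
qed

lemma card_edges_connected_subset_of_tree:
  assumes "is_tree V adj" "S \<subseteq> V" "connected_on S adj"
  shows "card (edges S adj) = card S - 1"
proof -
  have "finite V" "symp adj" "irreflp adj" "connected_on V adj"
    and edges_V: "card (edges V adj) = card V - 1"
    using assms(1) unfolding is_tree_def simple_graph_def symp_def irreflp_def by auto
  have "finite S"
    using assms(2) \<open>finite V\<close> by (rule finite_subset)
  obtain s where "s \<in> S"
    using assms(3) unfolding connected_on_def by blast
  have "card (arcs {s} adj) + 2 * (card S - card {s}) \<le> card (arcs S adj)"
    using \<open>s \<in> S\<close> \<open>finite S\<close> assms(3) \<open>symp adj\<close> \<open>irreflp adj\<close>
    by (intro card_arcs_connected_superset) (auto simp: connected_on_def)
  moreover have "card (arcs S adj) + 2 * (card V - card S) \<le> card (arcs V adj)"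
    using \<open>finite V\<close> assms(2,3) \<open>connected_on V adj\<close> \<open>symp adj\<close> \<open>irreflp adj\<close>
    by (rule card_arcs_connected_superset)
  moreover have "arcs {s} adj = {}"
    using \<open>irreflp adj\<close> by (simp add: arcs_def irreflp_def)
  moreover have "card S \<le> card V" "1 \<le> card S"
    using assms(2) \<open>finite V\<close> \<open>finite S\<close> \<open>s \<in> S\<close> card_mono
    by (auto simp: Suc_le_eq card_gt_0_iff)
  ultimately have "card (arcs S adj) = 2 * (card S - 1)"
    using card_arcs_eq_twice_card_edges[OF \<open>finite V\<close> \<open>symp adj\<close> \<open>irreflp adj\<close>] edges_V
    by simp
  then show ?thesis
    using card_arcs_eq_twice_card_edges[OF \<open>finite S\<close> \<open>symp adj\<close> \<open>irreflp adj\<close>] by simp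
qed

lemma Qn_sum_embedding_self:
  assumes emb: "symplectic_embedding V adj d phi" and "simple_graph V adj" "S \<subseteq> V"
  shows "Qn (card V) (\<Sum>v\<in>S. phi v) (\<Sum>v\<in>S. phi v)
    = (\<Sum>v\<in>S. d v) + 2 * int (card (edges S adj))"
proof -
  let ?n = "card V"
  have "finite S" "symp adj" "irreflp adj"
    using assms(2,3) finite_subset unfolding simple_graph_def symp_def irreflp_def by auto
  have row: "(\<Sum>v\<in>S. Qn ?n (phi u) (phi v)) = d u + int (card {v \<in> S. adj u v})"
    if "u \<in> S" for u
  proof -
    have "(\<Sum>v\<in>S. Qn ?n (phi u) (phi v))
        = (\<Sum>v\<in>S. (if v = u then d u else 0) + (if adj u v then 1 else 0))"
      using emb that assms(3) \<open>irreflp adj\<close>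
      by (intro sum.cong) (auto simp: symplectic_embedding_def Let_def irreflp_def subset_iff)
    also have "\<dots> = d u + int (card {v \<in> S. adj u v})"
      using that \<open>finite S\<close> by (simp add: sum.distrib sum.If_cases Int_def)
    finally show ?thesis .
  qed
  have "arcs S adj = Sigma S (\<lambda>u. {v \<in> S. adj u v})"
    unfolding arcs_def by auto
  then have "card (arcs S adj) = (\<Sum>u\<in>S. card {v \<in> S. adj u v})"
    using \<open>finite S\<close> by (simp add: card_SigmaI)
  moreover have "Qn ?n (\<Sum>v\<in>S. phi v) (\<Sum>v\<in>S. phi v)
      = (\<Sum>u\<in>S. d u + int (card {v \<in> S. adj u v}))"
    unfolding Qn_sum_left unfolding Qn_sum_right using row by (rule sum.cong[OF refl])
  ultimately have "Qn ?n (\<Sum>v\<in>S. phi v) (\<Sum>v\<in>S. phi v)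
      = (\<Sum>v\<in>S. d v) + int (card (arcs S adj))"
    by (simp add: sum.distrib)
  then show ?thesis
    using card_arcs_eq_twice_card_edges[OF \<open>finite S\<close> \<open>symp adj\<close> \<open>irreflp adj\<close>] by simp
qed

lemma Qn_sum_embedding_Kn:
  assumes "symplectic_embedding V adj d phi" "S \<subseteq> V"
  shows "Qn (card V) (\<Sum>v\<in>S. phi v) (Kn (card V)) = - 2 * int (card S) - (\<Sum>v\<in>S. d v)"
proof -
  have "Qn (card V) (\<Sum>v\<in>S. phi v) (Kn (card V)) = (\<Sum>v\<in>S. - 2 - d v)"
    using assms unfolding Qn_sum_left
    by (intro sum.cong) (auto simp: symplectic_embedding_def Let_def subset_iff algebra_simps)
  then show ?thesis
    by (simp add: sum_subtractf)
qed

theorem corollary3p2: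
  fixes V :: "'v set" and adj :: "'v \<Rightarrow> 'v \<Rightarrow> bool" and d :: "'v \<Rightarrow> int"
    and phi :: "'v \<Rightarrow> nat \<Rightarrow> int" and S :: "'v set"
  assumes "in_S_with V adj d phi"
    and "S \<subseteq> V" and "connected_on S adj"
  shows "\<exists>a\<in>{1..card V}. \<exists>J\<subseteq>{1..card V}. a \<notin> J \<and>
           ((\<Sum>v\<in>S. phi v) = E a - (\<Sum>j\<in>J. E j) \<or>
            (\<Sum>v\<in>S. phi v) = (\<lambda>i. - 2 * E a i) - (\<Sum>j\<in>J. E j))"
proof -
  let ?n = "card V" and ?w = "\<Sum>v\<in>S. phi v"
  have tree: "is_tree V adj" and emb: "symplectic_embedding V adj d phi"
    using assms(1) unfolding in_S_with_def by auto
  have "in_lattice ?n ?w"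
    using emb assms(2) by (intro in_lattice_sum) (auto simp: symplectic_embedding_def Let_def)
  have "finite S" "S \<noteq> {}"
    using tree assms(2,3) finite_subset
    unfolding is_tree_def simple_graph_def connected_on_def by auto
  then have "Qn ?n ?w ?w + Qn ?n ?w (Kn ?n) = -2"
    using Qn_sum_embedding_self[OF emb _ assms(2)] Qn_sum_embedding_Kn[OF emb assms(2)]
      card_edges_connected_subset_of_tree[OF tree assms(2,3)] tree
    by (simp add: is_tree_def of_nat_diff Suc_le_eq card_gt_0_iff)
  then have "(\<Sum>i\<in>{1..?n}. ?w i * (?w i + 1)) = 2"
    by (simp add: Qn_self_plus_Qn_Kn)
  with \<open>in_lattice ?n ?w\<close> show ?thesis
    by (rule lattice_vector_eq_E_minus_sum_E)
qed

end
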